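(* For the unit-sum normalization, there is an absolute constant $C>0$ such that for every $n\ge1$ and every truthful-in-expectation mechanism $J$ on $n$ agents and $n$ items, $ar(J)\le C/\sqrt n$.
   Context: Agents $N=\{1,\dots,n\}$, items $M=\{1,\dots,n\}$, outcomes are bijections $\mu$ ($O$ the set of outcomes). Unit-sum valuation functions: injective $u_i:M\to\mathbb R_{\ge0}$ with $\sum_j u_i(j)=1$; $V$ the set of these, $V^n$ the set of profiles. A (randomized) mechanism $J$ maps each profile to a distribution over $O$; $J(\mathbf u)_i$ is agent $i$'s random item. $J$ is truthful-in-expectation if for all $i$, $\mathbf u=(u_i,u_{-i})\in V^n$, $\tilde u_i\in V$: $\mathbb E[u_i(J(u_i,u_{-i})_i)]\ge\mathbb E[u_i(J(\tilde u_i,u_{-i})_i)]$. $ar(J)=\inf_{\mathbf u\in V^n}\mathbb E[\sum_i u_i(J(\mathbf u)_i)]/\max_{\mu\in O}\sum_i u_i(\mu_i)$. *)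

theory Defs
  imports "HOL-Probability.Probability" "HOL-Combinatorics.Permutations"
begin

(* Agents and items are indexed by {..<n} (i.e. 0..n-1 instead of 1..n).
   Valuations/profiles are extended by 0 outside the index range, so that the
   sets below are in bijection with V and V^n. *)

definition unit_sum_val :: "nat \<Rightarrow> (nat \<Rightarrow> real) \<Rightarrow> bool" where
  "unit_sum_val n v \<longleftrightarrow> inj_on v {..<n} \<and> (\<forall>j<n. v j \<ge> 0) \<and>
     (\<Sum>j<n. v j) = 1 \<and> (\<forall>j\<ge>n. v j = 0)"

definition profile :: "nat \<Rightarrow> (nat \<Rightarrow> nat \<Rightarrow> real) \<Rightarrow> bool" where
  "profile n u \<longleftrightarrow> (\<forall>i<n. unit_sum_val n (u i)) \<and> (\<forall>i\<ge>n. u i = (\<lambda>_. 0))"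

definition outcomes :: "nat \<Rightarrow> (nat \<Rightarrow> nat) set" where
  "outcomes n = {\<mu>. \<mu> permutes {..<n}}"

definition mechanism :: "nat \<Rightarrow> ((nat \<Rightarrow> nat \<Rightarrow> real) \<Rightarrow> (nat \<Rightarrow> nat) pmf) \<Rightarrow> bool" where
  "mechanism n J \<longleftrightarrow> (\<forall>u. profile n u \<longrightarrow> set_pmf (J u) \<subseteq> outcomes n)"

definition truthful_in_expectation ::
  "nat \<Rightarrow> ((nat \<Rightarrow> nat \<Rightarrow> real) \<Rightarrow> (nat \<Rightarrow> nat) pmf) \<Rightarrow> bool" where
  "truthful_in_expectation n J \<longleftrightarrow>
     (\<forall>i<n. \<forall>u v. profile n u \<longrightarrow> unit_sum_val n v \<longrightarrow>
        measure_pmf.expectation (J u) (\<lambda>\<mu>. u i (\<mu> i))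
        \<ge> measure_pmf.expectation (J (u(i := v))) (\<lambda>\<mu>. u i (\<mu> i)))"

definition welfare :: "nat \<Rightarrow> (nat \<Rightarrow> nat \<Rightarrow> real) \<Rightarrow> (nat \<Rightarrow> nat) \<Rightarrow> real" where
  "welfare n u \<mu> = (\<Sum>i<n. u i (\<mu> i))"

definition approx_ratio :: "nat \<Rightarrow> ((nat \<Rightarrow> nat \<Rightarrow> real) \<Rightarrow> (nat \<Rightarrow> nat) pmf) \<Rightarrow> real" where
  "approx_ratio n J = Inf {measure_pmf.expectation (J u) (welfare n u)
                            / Max (welfare n u ` outcomes n) | u. profile n u}"

end

theory Submission
  imports Defs
begin

text \<open>Let \<open>k = \<lfloor>\<surd>n\<rfloor>\<close> and label the agents by a permutation \<open>\<sigma>\<close>. In the profile where the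
  agents labelled \<open>m < k\<close> have a valuation peaked at item \<open>m\<close> and all other agents a flat
  valuation on the items below \<open>k\<close>, the optimal welfare is at least \<open>k/2\<close>. By truthfulness a
  peaked agent gets at most \<open>3k\<close> times the flat value it would get by reporting flat; but then it
  is indistinguishable from the \<open>n - k\<close> agents with labels \<open>\<ge> k\<close>, so averaged over \<open>\<sigma>\<close>
  that flat value is at most \<open>1/(n - k + 1)\<close>. Hence for some \<open>\<sigma>\<close> the expected welfare is at
  most \<open>1 + 3k\<^sup>2/(n - k + 1) = O(1)\<close>, and the ratio is \<open>O(1/k) = O(1/\<surd>n)\<close>.\<close>

abbreviation E :: "'a pmf \<Rightarrow> ('a \<Rightarrow> real) \<Rightarrow> real" where
  "E p f \<equiv> measure_pmf.expectation p f"

lemma expectation_le_const_finite: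
  "finite (set_pmf p) \<Longrightarrow> (\<And>x. x \<in> set_pmf p \<Longrightarrow> f x \<le> c) \<Longrightarrow> E p f \<le> c"
  by (rule measure_pmf.integral_le_const) (auto intro: integrable_measure_pmf_finite AE_pmfI)

lemma expectation_mono_finite:
  "finite (set_pmf p) \<Longrightarrow> (\<And>x. x \<in> set_pmf p \<Longrightarrow> f x \<le> g x) \<Longrightarrow> E p f \<le> E p g"
  by (rule integral_mono_AE) (auto intro: integrable_measure_pmf_finite AE_pmfI)

lemma expectation_sum_finite:
  "finite (set_pmf p) \<Longrightarrow> E p (\<lambda>x. \<Sum>i\<in>I. f i x) = (\<Sum>i\<in>I. E p (f i))"
  by (rule Bochner_Integration.integral_sum) (auto intro: integrable_measure_pmf_finite)

lemma unit_sum_val_nonneg: "unit_sum_val n v \<Longrightarrow> 0 \<le> v x"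
  unfolding unit_sum_val_def by (cases "x < n") auto

lemma sum_unit_sum_val_inj_le_one:
  assumes v: "unit_sum_val n v" and f: "inj_on f A" "f ` A \<subseteq> {..<n}"
  shows "(\<Sum>a\<in>A. v (f a)) \<le> 1"
proof -
  have "(\<Sum>a\<in>A. v (f a)) = (\<Sum>x\<in>f ` A. v x)"
    by (simp add: sum.reindex[OF f(1)])
  also have "\<dots> \<le> (\<Sum>x<n. v x)"
    using f(2) by (intro sum_mono2) (auto intro: unit_sum_val_nonneg[OF v])
  also have "\<dots> = 1"
    using v by (simp add: unit_sum_val_def)
  finally show ?thesis .
qed

lemma unit_sum_val_le_one:
  assumes v: "unit_sum_val n v" shows "v x \<le> 1"
proof (cases "x < n")
  case True
  then show ?thesis using sum_unit_sum_val_inj_le_one[OF v, of id "{x}"] by simp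
qed (use v in \<open>simp add: unit_sum_val_def\<close>)

definition normalized :: "nat \<Rightarrow> (nat \<Rightarrow> real) \<Rightarrow> nat \<Rightarrow> real" where
  "normalized n r x = (if x < n then r x / (\<Sum>y<n. r y) else 0)"

lemma unit_sum_val_normalized:
  assumes "0 < n" "\<And>x. x < n \<Longrightarrow> 0 < r x" "inj_on r {..<n}"
  shows "unit_sum_val n (normalized n r)"
proof -
  have "0 < (\<Sum>y<n. r y)"
    using assms(1,2) by (intro sum_pos) auto
  then show ?thesis
    using assms(2,3)
    by (auto simp: unit_sum_val_def normalized_def inj_on_def sum_divide_distrib[symmetric]
        intro: less_imp_le)
qed

text \<open>The flat valuation gives each item below \<open>k\<close> a value between \<open>1/(3k)\<close> and \<open>2/k\<close>
  and almost nothing to the others; the peak valuation for \<open>j\<close> puts at least half of its mass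
  on \<open>j\<close> and is elsewhere dominated by the flat one.\<close>

definition flat_weight :: "nat \<Rightarrow> nat \<Rightarrow> nat \<Rightarrow> real" where
  "flat_weight n k x =
     (if x < k then 2 * real n - real x else (real n - real x) / (real n)\<^sup>2)"

definition peak_weight :: "nat \<Rightarrow> nat \<Rightarrow> nat \<Rightarrow> nat \<Rightarrow> real" where
  "peak_weight n k j x = (if x = j then 3 * real k * real n else flat_weight n k x)"

definition flat_val :: "nat \<Rightarrow> nat \<Rightarrow> nat \<Rightarrow> real" where
  "flat_val n k = normalized n (flat_weight n k)"

definition peak_val :: "nat \<Rightarrow> nat \<Rightarrow> nat \<Rightarrow> nat \<Rightarrow> real" where
  "peak_val n k j = normalized n (peak_weight n k j)"

definition peak_profile :: "nat \<Rightarrow> nat \<Rightarrow> nat set \<Rightarrow> (nat \<Rightarrow> nat) \<Rightarrow> nat \<Rightarrow> nat \<Rightarrow> real" where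
  "peak_profile n k S \<sigma> a =
     (if a < n then if \<sigma> a \<in> S then peak_val n k (\<sigma> a) else flat_val n k else (\<lambda>_. 0))"

context
  fixes n k :: nat
  assumes k_pos: "1 \<le> k" and k_le_n: "k \<le> n"
begin

lemma one_le_k_times_n: "1 \<le> real k * real n"
  using mult_mono[of 1 "real k" 1 "real n"] k_pos k_le_n by simp

lemma flat_weight_head: "x < k \<Longrightarrow> real n < flat_weight n k x \<and> flat_weight n k x \<le> 2 * real n"
  using k_le_n by (auto simp: flat_weight_def)

lemma flat_weight_tail:
  assumes "k \<le> x" "x < n"
  shows "0 < flat_weight n k x \<and> flat_weight n k x \<le> 1 / real n"
  using assms by (auto simp: flat_weight_def power2_eq_square field_simps)

lemma flat_weight_pos: "x < n \<Longrightarrow> 0 < flat_weight n k x"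
  using flat_weight_head flat_weight_tail by (cases "x < k") force+

lemma flat_weight_tail_le_one: "k \<le> x \<Longrightarrow> x < n \<Longrightarrow> flat_weight n k x \<le> 1"
proof -
  have "1 / real n \<le> 1" using k_pos k_le_n by simp
  then show "k \<le> x \<Longrightarrow> x < n \<Longrightarrow> ?thesis" using flat_weight_tail[of x] by linarith
qed

lemma flat_weight_le: "x < n \<Longrightarrow> flat_weight n k x \<le> 2 * real n"
  using flat_weight_head[of x] flat_weight_tail_le_one[of x] by (cases "x < k") auto

lemma flat_weight_strict_antimono:
  assumes "x < y" "y < n"
  shows "flat_weight n k y < flat_weight n k x"
proof (cases "y < k")
  case True
  then show ?thesis using assms by (simp add: flat_weight_def)
next
  case y: False
  show ?thesis
  proof (cases "x < k")
    case True
    then show ?thesis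
      using flat_weight_head[of x] flat_weight_tail_le_one[of y] y assms k_pos by simp
  next
    case False
    then show ?thesis
      using y assms by (simp add: flat_weight_def divide_strict_right_mono)
  qed
qed

lemma inj_on_flat_weight: "inj_on (flat_weight n k) {..<n}"
  by (rule inj_onI) (metis lessThan_iff linorder_cases flat_weight_strict_antimono less_irrefl)

lemma sum_flat_weight_le: "(\<Sum>x<n. flat_weight n k x) \<le> 3 * real k * real n"
proof -
  have "(\<Sum>x<n. flat_weight n k x) \<le> (\<Sum>x<n. (if x < k then 2 * real n else 0) + 1 / real n)"
  proof (intro sum_mono)
    fix x assume "x \<in> {..<n}"
    then show "flat_weight n k x \<le> (if x < k then 2 * real n else 0) + 1 / real n"
      using flat_weight_head[of x] flat_weight_tail[of x]
      by (cases "x < k") (auto intro: add_increasing2)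
  qed
  also have "\<dots> = 2 * real k * real n + 1"
  proof -
    have "{..<n} \<inter> {x. x < k} = {..<k}" using k_le_n by auto
    then show ?thesis using k_pos k_le_n by (simp add: sum.distrib sum.If_cases)
  qed
  also have "\<dots> \<le> 3 * real k * real n"
    using one_le_k_times_n by simp
  finally show ?thesis .
qed

lemma sum_flat_weight_pos: "0 < (\<Sum>x<n. flat_weight n k x)"
  using k_pos k_le_n by (intro sum_pos) (auto simp: lessThan_empty_iff intro: flat_weight_pos)

lemma flat_weight_lt_peak: "x < n \<Longrightarrow> flat_weight n k x < 3 * real k * real n"
proof -
  have "3 * real n \<le> 3 * real k * real n"
    using mult_right_mono[of 1 "real k" "3 * real n"] k_pos by simp
  moreover assume "x < n"
  ultimately show ?thesis using flat_weight_le[of x] by linarith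
qed

lemma peak_weight_pos: "x < n \<Longrightarrow> 0 < peak_weight n k j x"
  using flat_weight_pos[of x] flat_weight_lt_peak[of x] by (auto simp: peak_weight_def)

lemma inj_on_peak_weight: "inj_on (peak_weight n k j) {..<n}"
  using inj_on_flat_weight flat_weight_lt_peak unfolding inj_on_def peak_weight_def
  by (metis less_irrefl lessThan_iff)

lemma unit_sum_val_flat_val: "unit_sum_val n (flat_val n k)"
  unfolding flat_val_def using k_pos k_le_n
  by (intro unit_sum_val_normalized flat_weight_pos inj_on_flat_weight) auto

lemma unit_sum_val_peak_val: "unit_sum_val n (peak_val n k j)"
  unfolding peak_val_def using k_pos k_le_n
  by (intro unit_sum_val_normalized peak_weight_pos inj_on_peak_weight) auto

lemma sum_peak_weight:
  assumes "j < n"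
  shows "(\<Sum>x<n. peak_weight n k j x) = (\<Sum>x<n. flat_weight n k x) + (3 * real k * real n - flat_weight n k j)"
proof -
  have "(\<Sum>x<n. peak_weight n k j x)
      = (\<Sum>x<n. flat_weight n k x + (if x = j then 3 * real k * real n - flat_weight n k j else 0))"
    by (intro sum.cong) (auto simp: peak_weight_def)
  then show ?thesis using assms by (simp add: sum.distrib)
qed

lemma flat_val_head_ge:
  assumes "x < k"
  shows "1 / (3 * real k) \<le> flat_val n k x"
proof -
  have "3 * real k * real n \<le> 3 * real k * flat_weight n k x"
    using flat_weight_head[OF assms] by (intro mult_left_mono) auto
  then have "(\<Sum>y<n. flat_weight n k y) \<le> 3 * real k * flat_weight n k x"
    using sum_flat_weight_le by linarith
  then show ?thesis
    using assms k_le_n k_pos sum_flat_weight_pos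
    by (simp add: flat_val_def normalized_def field_simps)
qed

lemma peak_val_self_ge:
  assumes "j < k"
  shows "1 / 2 \<le> peak_val n k j j"
proof -
  have j: "j < n" using assms k_le_n by simp
  have "(\<Sum>x<n. peak_weight n k j x) \<le> 2 * (3 * real k * real n)"
    using sum_peak_weight[OF j] sum_flat_weight_le flat_weight_pos[OF j] by linarith
  moreover have "0 < (\<Sum>x<n. peak_weight n k j x)"
    using sum_peak_weight[OF j] sum_flat_weight_pos flat_weight_lt_peak[OF j] by linarith
  ultimately show ?thesis
    using j by (simp add: peak_val_def normalized_def peak_weight_def field_simps)
qed

lemma peak_val_le_flat_val:
  assumes "j < k"
  shows "peak_val n k j x \<le> 3 * real k * flat_val n k x"
proof (cases "x = j")
  case True
  then show ?thesis
    using flat_val_head_ge[of x] unit_sum_val_le_one[OF unit_sum_val_peak_val, of j x] assms k_pos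
    by (simp add: field_simps)
next
  case False
  have "peak_val n k j x \<le> flat_val n k x"
  proof (cases "x < n")
    case True
    have "(\<Sum>y<n. flat_weight n k y) \<le> (\<Sum>y<n. peak_weight n k j y)"
      using sum_peak_weight[of j] flat_weight_lt_peak[of j] assms k_le_n by simp
    then show ?thesis
      using False True sum_flat_weight_pos flat_weight_pos[OF True]
      by (simp add: peak_val_def flat_val_def normalized_def peak_weight_def divide_left_mono)
  qed (simp add: peak_val_def flat_val_def normalized_def)
  also have "\<dots> \<le> 3 * real k * flat_val n k x"
    using mult_right_mono[of 1 "3 * real k" "flat_val n k x"]
      unit_sum_val_nonneg[OF unit_sum_val_flat_val] k_pos
    by simp
  finally show ?thesis .
qed

lemma profile_peak_profile: "profile n (peak_profile n k S \<sigma>)"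
  using unit_sum_val_flat_val unit_sum_val_peak_val by (auto simp: profile_def peak_profile_def)

end

lemma peak_profile_transpose:
  assumes "m \<notin> S" "j \<notin> S"
  shows "peak_profile n k S (Transposition.transpose m j \<circ> \<sigma>) = peak_profile n k S \<sigma>"
  using assms by (auto simp: peak_profile_def Transposition.transpose_def fun_eq_iff)

lemma peak_profile_update:
  assumes "inj_on \<sigma> {..<n}" "a < n" "\<sigma> a \<in> S"
  shows "(peak_profile n k (S - {\<sigma> a}) \<sigma>)(a := peak_val n k (\<sigma> a)) = peak_profile n k S \<sigma>"
  using assms by (auto simp: peak_profile_def fun_eq_iff inj_on_def)

lemma sum_comp_permutes_head:
  fixes \<sigma> :: "nat \<Rightarrow> nat"
  assumes "\<sigma> permutes {..<n}" "k \<le> n"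
  shows "(\<Sum>a\<in>{..<n} \<inter> {a. \<sigma> a < k}. f (\<sigma> a)) = (\<Sum>m<k. f m)"
proof -
  have "inv \<sigma> m < n" if "m < k" for m
    using permutes_in_image[OF permutes_inv[OF assms(1)]] that assms(2) by simp
  then show ?thesis
    using assms by (intro sum.reindex_bij_witness[of _ "inv \<sigma>" \<sigma>]) (auto simp: permutes_inverses)
qed

lemma finite_outcomes: "finite (outcomes n)"
  unfolding outcomes_def using finite_permutations[of "{..<n}"] by simp

lemma profile_nonneg: "profile n u \<Longrightarrow> 0 \<le> u i x"
  unfolding profile_def by (cases "i < n") (auto intro: unit_sum_val_nonneg)

lemma welfare_nonneg: "profile n u \<Longrightarrow> 0 \<le> welfare n u \<mu>"
  unfolding welfare_def by (intro sum_nonneg profile_nonneg)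

lemma approx_ratio_le:
  assumes u: "profile n u"
  shows "approx_ratio n J \<le> E (J u) (welfare n u) / Max (welfare n u ` outcomes n)"
  unfolding approx_ratio_def
proof (rule cInf_lower)
  have "0 \<le> Max (welfare n u ` outcomes n)" if "profile n u" for u
  proof -
    have "id \<in> outcomes n" by (simp add: outcomes_def)
    then have "welfare n u id \<le> Max (welfare n u ` outcomes n)"
      using finite_outcomes by (intro Max_ge) auto
    then show ?thesis using welfare_nonneg[OF that, of id] by linarith
  qed
  then show "bdd_below {E (J u) (welfare n u) / Max (welfare n u ` outcomes n) | u. profile n u}"
    by (intro bdd_belowI[of _ 0])
      (auto intro!: divide_nonneg_nonneg Bochner_Integration.integral_nonneg welfare_nonneg)
qed (use u in blast)

context
  fixes n k :: nat
  assumes k_pos: "1 \<le> k" and k_le_n: "k \<le> n"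
begin

lemma Max_welfare_peak_profile_ge:
  assumes \<sigma>: "\<sigma> permutes {..<n}"
  shows "real k / 2 \<le> Max (welfare n (peak_profile n k {..<k} \<sigma>) ` outcomes n)"
proof -
  let ?u = "peak_profile n k {..<k} \<sigma>"
  have "real k / 2 = (\<Sum>m<k. 1 / 2)" by simp
  also have "\<dots> \<le> (\<Sum>m<k. peak_val n k m m)"
    using k_pos k_le_n by (intro sum_mono peak_val_self_ge) auto
  also have "\<dots> = (\<Sum>a\<in>{..<n} \<inter> {a. \<sigma> a < k}. ?u a (\<sigma> a))"
    by (simp add: sum_comp_permutes_head[OF \<sigma> k_le_n, symmetric] peak_profile_def)
  also have "\<dots> \<le> welfare n ?u \<sigma>"
    unfolding welfare_def
    by (intro sum_mono2 profile_nonneg[OF profile_peak_profile[OF k_pos k_le_n]]) auto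
  also have "\<dots> \<le> Max (welfare n ?u ` outcomes n)"
    using finite_outcomes \<sigma> by (intro Max_ge) (auto simp: outcomes_def)
  finally show ?thesis .
qed

end

lemma sum_permutations_transpose_comp:
  assumes "m \<in> A" "j \<in> A"
  shows "(\<Sum>\<sigma>\<in>{\<sigma>. \<sigma> permutes A}. f (Transposition.transpose m j \<circ> \<sigma>))
       = (\<Sum>\<sigma>\<in>{\<sigma>. \<sigma> permutes A}. f \<sigma>)"
proof -
  have "Transposition.transpose m j permutes A"
    using assms by (rule permutes_swap_id)
  then show ?thesis
    by (intro sum.reindex_bij_witness[of _ "(\<circ>) (Transposition.transpose m j)"
          "(\<circ>) (Transposition.transpose m j)"])
      (auto simp: comp_assoc[symmetric] intro: permutes_compose)
qed

lemma exists_le_average: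
  fixes g :: "'a \<Rightarrow> real"
  assumes "finite P" "P \<noteq> {}" "(\<Sum>x\<in>P. g x) \<le> real (card P) * B"
  shows "\<exists>x\<in>P. g x \<le> B"
proof (rule ccontr)
  assume "\<not> ?thesis"
  then have "(\<Sum>x\<in>P. B) < (\<Sum>x\<in>P. g x)"
    using assms(1,2) by (intro sum_strict_mono) auto
  then show False using assms(3) by simp
qed

context
  fixes n k :: nat and J :: "(nat \<Rightarrow> nat \<Rightarrow> real) \<Rightarrow> (nat \<Rightarrow> nat) pmf"
  assumes k_pos: "1 \<le> k" and k_le_n: "k \<le> n"
    and mech: "mechanism n J" and truthful: "truthful_in_expectation n J"
begin

lemma finite_set_pmf_mechanism: "profile n u \<Longrightarrow> finite (set_pmf (J u))"
  using mech finite_outcomes finite_subset unfolding mechanism_def by blast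

lemma expected_sum_flat_val_le_one:
  assumes u: "profile n u" and f: "inj_on f A" "f ` A \<subseteq> {..<n}"
  shows "E (J u) (\<lambda>\<mu>. \<Sum>a\<in>A. flat_val n k (\<mu> (f a))) \<le> 1"
proof (rule expectation_le_const_finite[OF finite_set_pmf_mechanism[OF u]])
  fix \<mu> assume "\<mu> \<in> set_pmf (J u)"
  then have \<mu>: "\<mu> permutes {..<n}"
    using mech u unfolding mechanism_def outcomes_def by blast
  have "inj_on (\<mu> \<circ> f) A"
    using f permutes_inj_on[OF \<mu>] by (auto intro: comp_inj_on inj_on_subset)
  moreover have "(\<mu> \<circ> f) ` A \<subseteq> {..<n}"
    using f(2) permutes_in_image[OF \<mu>] by auto
  ultimately show "(\<Sum>a\<in>A. flat_val n k (\<mu> (f a))) \<le> 1"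
    using sum_unit_sum_val_inj_le_one[OF unit_sum_val_flat_val[OF k_pos k_le_n], of "\<mu> \<circ> f" A]
    by simp
qed

definition flat_report_utility :: "(nat \<Rightarrow> nat) \<Rightarrow> nat \<Rightarrow> real" where
  "flat_report_utility \<sigma> m =
     E (J (peak_profile n k ({..<k} - {m}) \<sigma>)) (\<lambda>\<mu>. flat_val n k (\<mu> (inv \<sigma> m)))"

lemma peak_utility_le:
  assumes \<sigma>: "\<sigma> permutes {..<n}" and a: "a < n" "\<sigma> a < k"
  shows "E (J (peak_profile n k {..<k} \<sigma>)) (\<lambda>\<mu>. peak_val n k (\<sigma> a) (\<mu> a))
         \<le> 3 * real k * flat_report_utility \<sigma> (\<sigma> a)"
proof -
  let ?P = "peak_profile n k {..<k} \<sigma>" and ?Q = "peak_profile n k ({..<k} - {\<sigma> a}) \<sigma>"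
  have "E (J ?P) (\<lambda>\<mu>. peak_val n k (\<sigma> a) (\<mu> a)) \<le> E (J ?P) (\<lambda>\<mu>. 3 * real k * flat_val n k (\<mu> a))"
    using finite_set_pmf_mechanism[OF profile_peak_profile[OF k_pos k_le_n]]
    by (rule expectation_mono_finite) (rule peak_val_le_flat_val[OF k_pos k_le_n a(2)])
  also have "\<dots> = 3 * real k * E (J ?P) (\<lambda>\<mu>. flat_val n k (\<mu> a))"
    by simp
  also have "E (J ?P) (\<lambda>\<mu>. flat_val n k (\<mu> a)) \<le> flat_report_utility \<sigma> (\<sigma> a)"
  proof -
    \<comment> \<open>In \<open>?Q\<close> agent \<open>a\<close> truly has the flat valuation, and misreporting its peak yields \<open>?P\<close>.\<close>
    have "?Q a = flat_val n k" using a by (simp add: peak_profile_def)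
    moreover have "?Q(a := peak_val n k (\<sigma> a)) = ?P"
      using peak_profile_update[OF permutes_inj_on[OF \<sigma>] a(1)] a(2) by simp
    moreover have "E (J ?Q) (\<lambda>\<mu>. ?Q a (\<mu> a)) \<ge> E (J (?Q(a := peak_val n k (\<sigma> a)))) (\<lambda>\<mu>. ?Q a (\<mu> a))"
      using truthful a(1) profile_peak_profile[OF k_pos k_le_n] unit_sum_val_peak_val[OF k_pos k_le_n]
      unfolding truthful_in_expectation_def by blast
    ultimately show ?thesis
      using permutes_inverses(2)[OF \<sigma>] by (simp add: flat_report_utility_def)
  qed
  finally show ?thesis using k_pos by (simp add: mult_left_mono)
qed

lemma expected_welfare_le:
  assumes \<sigma>: "\<sigma> permutes {..<n}"
  shows "E (J (peak_profile n k {..<k} \<sigma>)) (welfare n (peak_profile n k {..<k} \<sigma>))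
         \<le> 1 + 3 * real k * (\<Sum>m<k. flat_report_utility \<sigma> m)"
proof -
  let ?u = "peak_profile n k {..<k} \<sigma>"
  let ?head = "{..<n} \<inter> {a. \<sigma> a < k}" and ?tail = "{..<n} \<inter> - {a. \<sigma> a < k}"
  have u: "profile n ?u" by (rule profile_peak_profile[OF k_pos k_le_n])
  note fin = finite_set_pmf_mechanism[OF u]
  have "E (J ?u) (welfare n ?u) = (\<Sum>a<n. E (J ?u) (\<lambda>\<mu>. ?u a (\<mu> a)))"
    unfolding welfare_def by (rule expectation_sum_finite[OF fin])
  also have "\<dots> = (\<Sum>a<n. if \<sigma> a < k then E (J ?u) (\<lambda>\<mu>. peak_val n k (\<sigma> a) (\<mu> a))
                                   else E (J ?u) (\<lambda>\<mu>. flat_val n k (\<mu> a)))"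
    by (intro sum.cong) (auto simp: peak_profile_def)
  also have "\<dots> = (\<Sum>a\<in>?head. E (J ?u) (\<lambda>\<mu>. peak_val n k (\<sigma> a) (\<mu> a)))
                 + (\<Sum>a\<in>?tail. E (J ?u) (\<lambda>\<mu>. flat_val n k (\<mu> a)))"
    by (rule sum.If_cases) simp
  also have "(\<Sum>a\<in>?tail. E (J ?u) (\<lambda>\<mu>. flat_val n k (\<mu> a))) \<le> 1"
    using expected_sum_flat_val_le_one[OF u, of id ?tail]
    by (simp add: expectation_sum_finite[OF fin])
  also have "(\<Sum>a\<in>?head. E (J ?u) (\<lambda>\<mu>. peak_val n k (\<sigma> a) (\<mu> a)))
           \<le> (\<Sum>a\<in>?head. 3 * real k * flat_report_utility \<sigma> (\<sigma> a))"
    by (intro sum_mono peak_utility_le[OF \<sigma>]) auto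
  also have "\<dots> = 3 * real k * (\<Sum>m<k. flat_report_utility \<sigma> m)"
    by (simp add: sum_comp_permutes_head[OF \<sigma> k_le_n] flip: sum_distrib_left)
  finally show ?thesis by linarith
qed

lemma sum_flat_report_utility_le:
  assumes m: "m < k"
  shows "(\<Sum>\<sigma>\<in>{\<sigma>. \<sigma> permutes {..<n}}. flat_report_utility \<sigma> m)
         \<le> real (card {\<sigma>. \<sigma> permutes {..<n}}) / real (n - k + 1)"
proof -
  let ?P = "{\<sigma>. \<sigma> permutes {..<n}}" and ?S = "{..<k} - {m}" and ?labels = "insert m {k..<n}"
  define G where "G \<sigma> j = E (J (peak_profile n k ?S \<sigma>)) (\<lambda>\<mu>. flat_val n k (\<mu> (inv \<sigma> j)))" for \<sigma> j
  \<comment> \<open>The labels outside \<open>?S\<close> are interchangeable, so on average each holder gets the same share.\<close>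
  have share: "(\<Sum>\<sigma>\<in>?P. flat_report_utility \<sigma> m) = (\<Sum>\<sigma>\<in>?P. G \<sigma> j)" if j: "j \<in> ?labels" for j
  proof -
    have "flat_report_utility (Transposition.transpose m j \<circ> \<sigma>) m = G \<sigma> j" if "\<sigma> \<in> ?P" for \<sigma>
    proof -
      have "inv (Transposition.transpose m j \<circ> \<sigma>) m = inv \<sigma> j"
        using permutes_bij[of \<sigma> "{..<n}"] that
      by (simp only: o_inv_distrib[OF bij_transpose] inv_transpose_eq comp_apply
          Transposition.transpose_apply_first mem_Collect_eq)
      moreover have "peak_profile n k ?S (Transposition.transpose m j \<circ> \<sigma>) = peak_profile n k ?S \<sigma>"
        using j by (intro peak_profile_transpose) auto
      ultimately show ?thesis by (simp add: flat_report_utility_def G_def)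
    qed
    then have "(\<Sum>\<sigma>\<in>?P. flat_report_utility (Transposition.transpose m j \<circ> \<sigma>) m) = (\<Sum>\<sigma>\<in>?P. G \<sigma> j)"
      by (rule sum.cong[OF refl])
    moreover have "m \<in> {..<n}" "j \<in> {..<n}" using m j k_le_n by auto
    ultimately show ?thesis
      using sum_permutations_transpose_comp[of m "{..<n}" j "\<lambda>\<sigma>. flat_report_utility \<sigma> m"] by simp
  qed
  have "card ?labels = n - k + 1" using m k_le_n by simp
  then have "real (n - k + 1) * (\<Sum>\<sigma>\<in>?P. flat_report_utility \<sigma> m)
           = (\<Sum>j\<in>?labels. \<Sum>\<sigma>\<in>?P. flat_report_utility \<sigma> m)"
    by simp
  also have "\<dots> = (\<Sum>j\<in>?labels. \<Sum>\<sigma>\<in>?P. G \<sigma> j)"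
    by (rule sum.cong[OF refl]) (rule share)
  also have "\<dots> = (\<Sum>\<sigma>\<in>?P. \<Sum>j\<in>?labels. G \<sigma> j)"
    by (rule sum.swap)
  also have "\<dots> \<le> (\<Sum>\<sigma>\<in>?P. 1)"
  proof (rule sum_mono)
    fix \<sigma> assume "\<sigma> \<in> ?P"
    then have \<sigma>: "\<sigma> permutes {..<n}" by simp
    have u: "profile n (peak_profile n k ?S \<sigma>)" by (rule profile_peak_profile[OF k_pos k_le_n])
    have "inv \<sigma> j < n" if "j \<in> ?labels" for j
    proof -
      have "j < n" using that m k_le_n by auto
      then show ?thesis using permutes_in_image[OF permutes_inv[OF \<sigma>]] by simp
    qed
    then have "inv \<sigma> ` ?labels \<subseteq> {..<n}" by auto
    then show "(\<Sum>j\<in>?labels. G \<sigma> j) \<le> 1"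
      using expected_sum_flat_val_le_one[OF u permutes_inj_on[OF permutes_inv[OF \<sigma>]]]
      by (simp add: G_def expectation_sum_finite[OF finite_set_pmf_mechanism[OF u], symmetric])
  qed
  finally show ?thesis using k_le_n by (simp add: field_simps)
qed

lemma exists_low_welfare_permutation:
  "\<exists>\<sigma>. \<sigma> permutes {..<n} \<and>
     E (J (peak_profile n k {..<k} \<sigma>)) (welfare n (peak_profile n k {..<k} \<sigma>))
       \<le> 1 + 3 * real k * real k / real (n - k + 1)"
proof -
  let ?P = "{\<sigma>. \<sigma> permutes {..<n}}" and ?N = "real (card {\<sigma>. \<sigma> permutes {..<n}})"
  let ?W = "\<lambda>\<sigma>. E (J (peak_profile n k {..<k} \<sigma>)) (welfare n (peak_profile n k {..<k} \<sigma>))"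
  have "(\<Sum>\<sigma>\<in>?P. ?W \<sigma>) \<le> (\<Sum>\<sigma>\<in>?P. 1 + 3 * real k * (\<Sum>m<k. flat_report_utility \<sigma> m))"
    by (intro sum_mono expected_welfare_le) simp
  also have "\<dots> = ?N + 3 * real k * (\<Sum>m<k. \<Sum>\<sigma>\<in>?P. flat_report_utility \<sigma> m)"
    by (simp add: sum.distrib sum_distrib_left sum.swap[of _ ?P])
  also have "\<dots> \<le> ?N + 3 * real k * (\<Sum>m<k. ?N / real (n - k + 1))"
    by (intro add_left_mono mult_left_mono sum_mono sum_flat_report_utility_le) auto
  also have "\<dots> = ?N * (1 + 3 * real k * real k / real (n - k + 1))"
    by (simp add: algebra_simps)
  moreover have "?P \<noteq> {}" using permutes_id by blast
  ultimately have "\<exists>\<sigma>\<in>?P. ?W \<sigma> \<le> 1 + 3 * real k * real k / real (n - k + 1)"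
    using finite_permutations[of "{..<n}"] by (intro exists_le_average) auto
  then show ?thesis by blast
qed

lemma approx_ratio_le_peak_bound:
  "approx_ratio n J \<le> (1 + 3 * real k * real k / real (n - k + 1)) / (real k / 2)"
proof -
  obtain \<sigma> where \<sigma>: "\<sigma> permutes {..<n}"
    and low: "E (J (peak_profile n k {..<k} \<sigma>)) (welfare n (peak_profile n k {..<k} \<sigma>))
                \<le> 1 + 3 * real k * real k / real (n - k + 1)"
    using exists_low_welfare_permutation by blast
  let ?u = "peak_profile n k {..<k} \<sigma>"
  have u: "profile n ?u" by (rule profile_peak_profile[OF k_pos k_le_n])
  have "approx_ratio n J \<le> E (J ?u) (welfare n ?u) / Max (welfare n ?u ` outcomes n)"
    by (rule approx_ratio_le[OF u])
  also have "\<dots> \<le> (1 + 3 * real k * real k / real (n - k + 1)) / (real k / 2)"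
    using low Max_welfare_peak_profile_ge[OF k_pos k_le_n \<sigma>] k_pos welfare_nonneg[OF u]
    by (intro frac_le Bochner_Integration.integral_nonneg) auto
  finally show ?thesis .
qed

end

lemma floor_sqrt_ratio_bound:
  fixes n :: nat
  assumes n: "1 \<le> n"
  defines "k \<equiv> nat \<lfloor>sqrt (real n)\<rfloor>"
  shows "1 \<le> k" "k \<le> n"
    "(1 + 3 * real k * real k / real (n - k + 1)) / (real k / 2) \<le> 16 / sqrt (real n)"
proof -
  let ?s = "sqrt (real n)"
  have s: "1 \<le> ?s" using n by simp
  have k_floor: "real k = of_int \<lfloor>?s\<rfloor>" unfolding k_def using s by simp
  then have k_le_s: "real k \<le> ?s" and s_less: "?s < real k + 1" by linarith+
  have k: "1 \<le> real k" using k_floor s by (simp add: one_le_floor)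
  then show "1 \<le> k" by simp
  have "real k * ?s \<le> real n"
    using mult_right_mono[OF k_le_s, of ?s] s by simp
  moreover have "real k * real k \<le> real k * ?s"
    using mult_left_mono[OF k_le_s, of "real k"] by simp
  ultimately have kk: "real k * real k \<le> real n" by linarith
  have "real k \<le> real k * real k" using mult_right_mono[OF k, of "real k"] by simp
  then show k_le: "k \<le> n" using kk by linarith
  have "0 \<le> (real k - 1) * (real k - 1)" by simp
  then have half: "real n \<le> 2 * (real n - real k + 1)" using kk by (simp add: algebra_simps)
  have d: "real (n - k + 1) = real n - real k + 1" using k_le by (simp add: of_nat_diff)
  have "2 / real k \<le> 4 / ?s"
  proof -
    have "2 * ?s \<le> 4 * real k" using s_less k by linarith
    then show ?thesis using k s by (simp add: divide_simps)
  qed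
  moreover have "6 * real k / (real n - real k + 1) \<le> 12 / ?s"
    using \<open>real k * ?s \<le> real n\<close> half s n by (simp add: field_simps)
  moreover have "(1 + 3 * real k * real k / real (n - k + 1)) / (real k / 2)
      = 2 / real k + 6 * real k / (real n - real k + 1)"
    using k half n unfolding d by (simp add: field_simps)
  ultimately show "(1 + 3 * real k * real k / real (n - k + 1)) / (real k / 2) \<le> 16 / ?s"
    by simp
qed

theorem lemma9:
  shows "\<exists>C>0. \<forall>n\<ge>1. \<forall>J. mechanism n J \<and> truthful_in_expectation n J
            \<longrightarrow> approx_ratio n J \<le> C / sqrt (real n)"
proof (intro exI[of _ 16] conjI allI impI)
  fix n :: nat and J :: "(nat \<Rightarrow> nat \<Rightarrow> real) \<Rightarrow> (nat \<Rightarrow> nat) pmf"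
  assume n: "1 \<le> n" and J: "mechanism n J \<and> truthful_in_expectation n J"
  define k where "k = nat \<lfloor>sqrt (real n)\<rfloor>"
  have "1 \<le> k" "k \<le> n"
    using floor_sqrt_ratio_bound(1,2)[OF n] by (simp_all add: k_def)
  then have "approx_ratio n J \<le> (1 + 3 * real k * real k / real (n - k + 1)) / (real k / 2)"
    using approx_ratio_le_peak_bound J by blast
  also have "\<dots> \<le> 16 / sqrt (real n)"
    using floor_sqrt_ratio_bound(3)[OF n] by (simp add: k_def)
  finally show "approx_ratio n J \<le> 16 / sqrt (real n)" .
qed simp

end
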